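(* Let $X_1,\dots,X_n$ ($n\ge 1$) and $Y$ be jointly distributed discrete random variables with $I(\mathbf X;Y)>0$, where $\mathbf X=(X_1,\dots,X_n)$. Let $\Pi:\mathcal A_n\to\mathbb R$ be any partial information decomposition (as defined in the context). Then the average degree of redundancy satisfies $$\bar r=\frac{\sum_{i=1}^n I(X_i;Y)}{I(\mathbf X;Y)}.$$ In particular, $\bar r$ takes the same value for every partial information decomposition $\Pi$ and depends only on the joint distribution of $(\mathbf X,Y)$ through Shannon entropies.
   Context: Notation: $[n]=\{1,\dots,n\}$. For $\mathbf a\subseteq[n]$, $X_{\mathbf a}=(X_i)_{i\in\mathbf a}$, and $X_{[n]}=\mathbf X$. Antichains: $\mathcal A_n$ is the set of all nonempty collections $\alpha$ of nonempty subsets of $[n]$ such that no element of $\alpha$ is a proper subset of another element of $\alpha$. Partial information decomposition (PID): any function $\Pi:\mathcal A_n\to\mathbb R$ satisfying the consistency equation: for every nonempty $\mathbf a\subseteq[n]$, $$I(X_{\mathbf a};Y)=\sum_{\alpha\in\mathcal A_n:\ \exists \mathbf b\in\alpha,\ \mathbf b\subseteq \mathbf a}\Pi(\alpha).$$ Degree of redundancy of $\alpha\in\mathcal A_n$: $r(\alpha)=|\{i\in[n]: \{i\}\in\alpha\}|$. Average degree of redundancy (defined when $I(\mathbf X;Y)>0$): $$\bar r=\sum_{k=0}^n k\sum_{\alpha:\ r(\alpha)=k}\frac{\Pi(\alpha)}{I(\mathbf X;Y)}.$$ *)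

theory Defs
  imports "HOL-Probability.Probability_Mass_Function" "HOL-Analysis.Infinite_Sum"
begin

definition mutual_info :: "('u \<times> 'v) pmf \<Rightarrow> real" where
  "mutual_info p = (\<Sum>\<^sub>\<infinity>(u,v)\<in>UNIV.
      pmf p (u,v) * log 2 (pmf p (u,v) / (pmf (map_pmf fst p) u * pmf (map_pmf snd p) v)))"

text \<open>Joint law of (X_a, Y), where X_a = (X_i)_{i in a} is represented as a function
  restricted to a (undefined outside a).\<close>
definition joint_sub :: "'o pmf \<Rightarrow> (nat \<Rightarrow> 'o \<Rightarrow> 'a) \<Rightarrow> ('o \<Rightarrow> 'b) \<Rightarrow> nat set
    \<Rightarrow> ((nat \<Rightarrow> 'a) \<times> 'b) pmf" where
  "joint_sub M X Y a = map_pmf (\<lambda>\<omega>. (restrict (\<lambda>i. X i \<omega>) a, Y \<omega>)) M"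

definition MI_sub :: "'o pmf \<Rightarrow> (nat \<Rightarrow> 'o \<Rightarrow> 'a) \<Rightarrow> ('o \<Rightarrow> 'b) \<Rightarrow> nat set \<Rightarrow> real" where
  "MI_sub M X Y a = mutual_info (joint_sub M X Y a)"

definition MI_single :: "'o pmf \<Rightarrow> (nat \<Rightarrow> 'o \<Rightarrow> 'a) \<Rightarrow> ('o \<Rightarrow> 'b) \<Rightarrow> nat \<Rightarrow> real" where
  "MI_single M X Y i = mutual_info (map_pmf (\<lambda>\<omega>. (X i \<omega>, Y \<omega>)) M)"

definition antichains :: "nat \<Rightarrow> nat set set set" where
  "antichains n = {\<alpha>. \<alpha> \<noteq> {} \<and> (\<forall>b\<in>\<alpha>. b \<noteq> {} \<and> b \<subseteq> {1..n})
                      \<and> (\<forall>b\<in>\<alpha>. \<forall>c\<in>\<alpha>. \<not> b \<subset> c)}"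

definition is_PID :: "nat \<Rightarrow> (nat set \<Rightarrow> real) \<Rightarrow> (nat set set \<Rightarrow> real) \<Rightarrow> bool" where
  "is_PID n I PI \<longleftrightarrow> (\<forall>a. a \<noteq> {} \<and> a \<subseteq> {1..n} \<longrightarrow>
      I a = (\<Sum>\<alpha>\<in>{\<alpha>\<in>antichains n. \<exists>b\<in>\<alpha>. b \<subseteq> a}. PI \<alpha>))"

definition degree_red :: "nat \<Rightarrow> nat set set \<Rightarrow> nat" where
  "degree_red n \<alpha> = card {i\<in>{1..n}. {i} \<in> \<alpha>}"

definition avg_degree_red :: "nat \<Rightarrow> real \<Rightarrow> (nat set set \<Rightarrow> real) \<Rightarrow> real" where
  "avg_degree_red n Itot PI =
     (\<Sum>k=0..n. real k * (\<Sum>\<alpha>\<in>{\<alpha>\<in>antichains n. degree_red n \<alpha> = k}. PI \<alpha> / Itot))"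

end

theory Submission
  imports Defs
begin

text \<open>Weighting each antichain \<alpha> by its degree of redundancy r(\<alpha>) amounts to counting every
  pair (i, \<alpha>) with {i} \<in> \<alpha> once. For fixed i, an antichain of nonempty sets contains a subset
  of {i} exactly when it contains {i}, so the consistency equation for a = {i} says that these
  pairs carry total mass I(X_i;Y). Hence the average degree times I(X;Y) is the sum of the I(X_i;Y)
  for every PID.\<close>

lemma mutual_info_map_fst_inj:
  fixes p :: "('u \<times> 'v) pmf" and g :: "'u \<Rightarrow> 'w"
  assumes "inj g"
  shows "mutual_info (map_pmf (\<lambda>(u, v). (g u, v)) p) = mutual_info p"
proof -
  define h where "h = (\<lambda>(u::'u, v::'v). (g u, v))"
  have inj_h: "inj h" using assms unfolding h_def inj_def by auto
  define p' where "p' = map_pmf h p"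
  have fst_p': "map_pmf fst p' = map_pmf g (map_pmf fst p)"
    and snd_p': "map_pmf snd p' = map_pmf snd p"
    unfolding p'_def h_def by (simp_all add: map_pmf_comp split_beta)
  define F where "F = (\<lambda>(u, v). pmf p' (u, v)
      * log 2 (pmf p' (u, v) / (pmf (map_pmf fst p') u * pmf (map_pmf snd p') v)))"
  define G where "G = (\<lambda>(u, v). pmf p (u, v)
      * log 2 (pmf p (u, v) / (pmf (map_pmf fst p) u * pmf (map_pmf snd p) v)))"
  have "mutual_info p' = infsum F UNIV" unfolding mutual_info_def F_def ..
  also have "\<dots> = infsum F (range h)"
  proof (rule infsum_cong_neutral)
    fix x assume "x \<in> UNIV - range h"
    then have "pmf p' x = 0" unfolding p'_def by (intro pmf_map_outside) auto
    then show "F x = 0" unfolding F_def by (cases x) auto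
  qed auto
  also have "\<dots> = infsum (F \<circ> h) UNIV"
    using inj_h by (intro infsum_reindex) (auto simp: inj_on_def)
  also have "\<dots> = infsum G UNIV"
  proof (rule infsum_cong)
    fix x :: "'u \<times> 'v"
    obtain u v where x: "x = (u, v)" by (cases x)
    have "pmf p' (g u, v) = pmf p (u, v)"
      using pmf_map_inj'[OF inj_h, of p "(u, v)"] by (simp add: p'_def h_def)
    moreover have "pmf (map_pmf fst p') (g u) = pmf (map_pmf fst p) u"
      unfolding fst_p' by (rule pmf_map_inj'[OF assms])
    ultimately show "(F \<circ> h) x = G x" unfolding F_def G_def x h_def by (simp add: snd_p')
  qed
  also have "\<dots> = mutual_info p" unfolding mutual_info_def G_def ..
  finally show ?thesis unfolding p'_def h_def .
qed

lemma MI_sub_singleton: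
  fixes M :: "'o pmf" and X :: "nat \<Rightarrow> 'o \<Rightarrow> 'a" and Y :: "'o \<Rightarrow> 'b"
  shows "MI_sub M X Y {i} = MI_single M X Y i"
proof -
  define g where "g = (\<lambda>u::'a. \<lambda>j::nat. if j = i then u else undefined)"
  have "inj g" by (rule injI) (metis g_def)
  have "joint_sub M X Y {i} = map_pmf (\<lambda>(u, v). (g u, v)) (map_pmf (\<lambda>\<omega>. (X i \<omega>, Y \<omega>)) M)"
    unfolding joint_sub_def g_def
    by (auto simp: map_pmf_comp restrict_def fun_eq_iff intro!: map_pmf_cong)
  then show ?thesis
    unfolding MI_sub_def MI_single_def using mutual_info_map_fst_inj[OF \<open>inj g\<close>] by simp
qed

lemma finite_antichains: "finite (antichains n)"
  by (rule finite_subset[of _ "Pow (Pow {1..n})"]) (auto simp: antichains_def)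

lemma antichain_has_subset_of_singleton_iff:
  assumes "\<alpha> \<in> antichains n"
  shows "(\<exists>b\<in>\<alpha>. b \<subseteq> {i}) \<longleftrightarrow> {i} \<in> \<alpha>"
  using assms unfolding antichains_def by (auto simp: subset_singleton_iff)

lemma is_PID_singleton:
  assumes "is_PID n I PI" and "i \<in> {1..n}"
  shows "I {i} = (\<Sum>\<alpha>\<in>{\<alpha>\<in>antichains n. {i} \<in> \<alpha>}. PI \<alpha>)"
proof -
  have "{\<alpha>\<in>antichains n. \<exists>b\<in>\<alpha>. b \<subseteq> {i}} = {\<alpha>\<in>antichains n. {i} \<in> \<alpha>}"
    using antichain_has_subset_of_singleton_iff by blast
  with assms show ?thesis unfolding is_PID_def by auto
qed

lemma sum_degree_red_weighted:
  "(\<Sum>\<alpha>\<in>antichains n. real (degree_red n \<alpha>) * w \<alpha>)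
     = (\<Sum>i=1..n. \<Sum>\<alpha>\<in>{\<alpha>\<in>antichains n. {i} \<in> \<alpha>}. w \<alpha>)"
proof -
  have "(\<Sum>\<alpha>\<in>antichains n. real (degree_red n \<alpha>) * w \<alpha>)
      = (\<Sum>\<alpha>\<in>antichains n. \<Sum>i=1..n. if {i} \<in> \<alpha> then w \<alpha> else 0)"
    by (simp add: degree_red_def sum.inter_filter[symmetric])
  also have "\<dots> = (\<Sum>i=1..n. \<Sum>\<alpha>\<in>antichains n. if {i} \<in> \<alpha> then w \<alpha> else 0)"
    by (rule sum.swap)
  also have "\<dots> = (\<Sum>i=1..n. \<Sum>\<alpha>\<in>{\<alpha>\<in>antichains n. {i} \<in> \<alpha>}. w \<alpha>)"
    by (simp add: finite_antichains sum.inter_filter)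
  finally show ?thesis .
qed

lemma avg_degree_red_eq_weighted_sum:
  "avg_degree_red n T PI = (\<Sum>\<alpha>\<in>antichains n. real (degree_red n \<alpha>) * PI \<alpha>) / T"
proof -
  have degree_le: "degree_red n \<alpha> \<le> n" for \<alpha>
    unfolding degree_red_def by (rule order_trans[OF card_mono[of "{1..n}"]]) auto
  have "avg_degree_red n T PI
      = (\<Sum>k=0..n. \<Sum>\<alpha>\<in>{\<alpha>\<in>antichains n. degree_red n \<alpha> = k}. real (degree_red n \<alpha>) * PI \<alpha> / T)"
    unfolding avg_degree_red_def by (simp add: sum_distrib_left)
  also have "\<dots> = (\<Sum>\<alpha>\<in>antichains n. real (degree_red n \<alpha>) * PI \<alpha> / T)"
    using finite_antichains degree_le by (intro sum.group) auto
  finally show ?thesis by (simp add: sum_divide_distrib)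
qed

lemma avg_degree_red_PID:
  assumes "is_PID n I PI"
  shows "avg_degree_red n T PI = (\<Sum>i=1..n. I {i}) / T"
  using is_PID_singleton[OF assms]
  by (simp add: avg_degree_red_eq_weighted_sum sum_degree_red_weighted)

theorem proposition1:
  fixes M :: "'o pmf" and X :: "nat \<Rightarrow> 'o \<Rightarrow> 'a" and Y :: "'o \<Rightarrow> 'b"
    and n :: nat and PI :: "nat set set \<Rightarrow> real"
  assumes "n \<ge> 1"
    and "MI_sub M X Y {1..n} > 0"
    and "is_PID n (MI_sub M X Y) PI"
  shows "avg_degree_red n (MI_sub M X Y {1..n}) PI
           = (\<Sum>i=1..n. MI_single M X Y i) / MI_sub M X Y {1..n}"
  using avg_degree_red_PID[OF assms(3)] by (simp add: MI_sub_singleton)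

end
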